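(* Let $\phi=(Q,\Sigma,\delta^\phi,q_0,Q\setminus\{q_{err}\})$ be a finite-state property and $R\subseteq\Sigma^*\times\Gamma$ a loss model. Define the NFA $\psi^*=(Q,\Gamma,\delta^{\psi^*},q_0,Q\setminus\{q_{err}\})$ by $$\delta^{\psi^*}(q,\gamma)=\delta^\phi(q,R^{-1}(\gamma))=\{\delta^\phi(q,s)\mid s\in\Sigma^*,\ sR\gamma\}\quad(q\in Q,\ \gamma\in\Gamma).$$ Then $\psi^*$ satisfies the superposed monitor condition and $L(\psi^* )=L_{opt}(\phi,R)$, where $L_{opt}(\phi,R)=\{y\in\Gamma^*\mid \mathcal{F}_R^{-1}(y)\cap L(\phi)\neq\emptyset\}$.
   Context: A finite-state property is a minimum-state DFA $\phi=(Q,\Sigma,\delta^\phi,q_0,Q\setminus\{q_{err}\})$ with designated trap error state $q_{err}$; $L(\phi)=\{x\mid\delta^\phi(q_0,x)\neq q_{err}\}$. $\delta^\phi$ is lifted to sets of states and sets of strings. A loss model is $R\subseteq\Sigma^*\times\Gamma$ with $\Gamma$ finite, and $R^{-1}(\gamma)=\{s\mid sR\gamma\}$. A filter under $R$ is determined by pairs $(s_1,\gamma_1),\dots,(s_m,\gamma_m)$ with $s_iR\gamma_i$ and a string $r\in\Sigma^*$; it maps each prefix $x$ of $s_1\cdots s_m r$ to $\gamma_1\cdots\gamma_j$ with $j$ maximal such that $s_1\cdots s_j$ is a prefix of $x$. $x\in\Sigma^*$ is a completion of $y\in\Gamma^*$ if some filter $f$ under $R$ has $f(x)=y$ and $f(x')\neq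 y$ for every proper prefix $x'$ of $x$; $\mathcal{F}_R^{-1}(y)$ is the set of completions. For an NFA $\psi=(Q,\Gamma,\delta^\psi,q_0,Q\setminus\{q_{err}\})$, $L(\psi)=\{y\mid\delta^\psi(\{q_0\},y)\cap(Q\setminus\{q_{err}\})\neq\emptyset\}$; it satisfies the superposed monitor condition if $\delta^\phi(q_0,x)\in\delta^\psi(\{q_0\},y)$ for all $y\in\Gamma^*$ and all $x\in\mathcal{F}_R^{-1}(y)$. *)

theory Defs
  imports Main "HOL-Library.Sublist"
begin

definition dfa_run :: "('q \<Rightarrow> 'a \<Rightarrow> 'q) \<Rightarrow> 'q \<Rightarrow> 'a list \<Rightarrow> 'q" where
  "dfa_run \<delta> q xs = foldl \<delta> q xs"

definition is_dfa :: "'q set \<Rightarrow> 'a set \<Rightarrow> ('q \<Rightarrow> 'a \<Rightarrow> 'q) \<Rightarrow> 'q \<Rightarrow> 'q set \<Rightarrow> bool" where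
  "is_dfa Q \<Sigma> \<delta> q0 F \<longleftrightarrow> finite Q \<and> finite \<Sigma> \<and> q0 \<in> Q \<and> F \<subseteq> Q \<and>
     (\<forall>q\<in>Q. \<forall>a\<in>\<Sigma>. \<delta> q a \<in> Q)"

definition dfa_lang :: "'a set \<Rightarrow> ('q \<Rightarrow> 'a \<Rightarrow> 'q) \<Rightarrow> 'q \<Rightarrow> 'q set \<Rightarrow> 'a list set" where
  "dfa_lang \<Sigma> \<delta> q0 F = {x \<in> lists \<Sigma>. dfa_run \<delta> q0 x \<in> F}"

text \<open>Minimum-state DFA: no DFA over the same alphabet accepting the same language has
  fewer states. Competitor DFAs are taken with states in nat (every finite DFA is
  isomorphic to one of those).\<close>
definition min_state_dfa :: "'q set \<Rightarrow> 'a set \<Rightarrow> ('q \<Rightarrow> 'a \<Rightarrow> 'q) \<Rightarrow> 'q \<Rightarrow> 'q set \<Rightarrow> bool" where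
  "min_state_dfa Q \<Sigma> \<delta> q0 F \<longleftrightarrow> is_dfa Q \<Sigma> \<delta> q0 F \<and>
     (\<forall>(Q'::nat set) \<delta>' q0' F'. is_dfa Q' \<Sigma> \<delta>' q0' F' \<and>
        dfa_lang \<Sigma> \<delta>' q0' F' = dfa_lang \<Sigma> \<delta> q0 F \<longrightarrow> card Q \<le> card Q')"

definition finite_state_property ::
  "'q set \<Rightarrow> 'a set \<Rightarrow> ('q \<Rightarrow> 'a \<Rightarrow> 'q) \<Rightarrow> 'q \<Rightarrow> 'q \<Rightarrow> bool" where
  "finite_state_property Q \<Sigma> \<delta> q0 qerr \<longleftrightarrow> qerr \<in> Q \<and>
     (\<forall>a\<in>\<Sigma>. \<delta> qerr a = qerr) \<and> min_state_dfa Q \<Sigma> \<delta> q0 (Q - {qerr})"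

definition prop_lang :: "'a set \<Rightarrow> ('q \<Rightarrow> 'a \<Rightarrow> 'q) \<Rightarrow> 'q \<Rightarrow> 'q \<Rightarrow> 'a list set" where
  "prop_lang \<Sigma> \<delta> q0 qerr = {x \<in> lists \<Sigma>. dfa_run \<delta> q0 x \<noteq> qerr}"

definition loss_model :: "'a set \<Rightarrow> 'g set \<Rightarrow> ('a list \<times> 'g) set \<Rightarrow> bool" where
  "loss_model \<Sigma> \<Gamma> R \<longleftrightarrow> finite \<Gamma> \<and> R \<subseteq> lists \<Sigma> \<times> \<Gamma>"

text \<open>The filter determined by pairs ps = [(s1,g1),...,(sm,gm)] (and a string r, which only
  determines the domain): maps x to g1...gj with j maximal such that s1...sj is a prefix of x.\<close>
definition filter_fun :: "('a list \<times> 'g) list \<Rightarrow> 'a list \<Rightarrow> 'g list" where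
  "filter_fun ps x = map snd (take (GREATEST j. j \<le> length ps \<and>
       prefix (concat (map fst (take j ps))) x) ps)"

definition completions :: "'a set \<Rightarrow> ('a list \<times> 'g) set \<Rightarrow> 'g list \<Rightarrow> 'a list set" where
  "completions \<Sigma> R y = {x. \<exists>ps r. set ps \<subseteq> R \<and> r \<in> lists \<Sigma> \<and>
       prefix x (concat (map fst ps) @ r) \<and> filter_fun ps x = y \<and>
       (\<forall>x'. strict_prefix x' x \<longrightarrow> filter_fun ps x' \<noteq> y)}"

definition L_opt :: "'a set \<Rightarrow> 'g set \<Rightarrow> ('q \<Rightarrow> 'a \<Rightarrow> 'q) \<Rightarrow> 'q \<Rightarrow> 'q \<Rightarrow>
    ('a list \<times> 'g) set \<Rightarrow> 'g list set" where
  "L_opt \<Sigma> \<Gamma> \<delta> q0 qerr R =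
     {y \<in> lists \<Gamma>. completions \<Sigma> R y \<inter> prop_lang \<Sigma> \<delta> q0 qerr \<noteq> {}}"

definition nfa_run :: "('q \<Rightarrow> 'g \<Rightarrow> 'q set) \<Rightarrow> 'q set \<Rightarrow> 'g list \<Rightarrow> 'q set" where
  "nfa_run \<delta> S ys = foldl (\<lambda>T g. \<Union>q\<in>T. \<delta> q g) S ys"

definition nfa_lang :: "'g set \<Rightarrow> 'q set \<Rightarrow> ('q \<Rightarrow> 'g \<Rightarrow> 'q set) \<Rightarrow> 'q \<Rightarrow> 'q \<Rightarrow> 'g list set" where
  "nfa_lang \<Gamma> Q \<delta> q0 qerr = {y \<in> lists \<Gamma>. nfa_run \<delta> {q0} y \<inter> (Q - {qerr}) \<noteq> {}}"

definition superposed_monitor ::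
  "'a set \<Rightarrow> 'g set \<Rightarrow> ('q \<Rightarrow> 'a \<Rightarrow> 'q) \<Rightarrow> 'q \<Rightarrow> ('a list \<times> 'g) set \<Rightarrow>
   ('q \<Rightarrow> 'g \<Rightarrow> 'q set) \<Rightarrow> bool" where
  "superposed_monitor \<Sigma> \<Gamma> \<delta> q0 R \<delta>\<psi> \<longleftrightarrow>
     (\<forall>y\<in>lists \<Gamma>. \<forall>x\<in>completions \<Sigma> R y. dfa_run \<delta> q0 x \<in> nfa_run \<delta>\<psi> {q0} y)"

definition psi_star :: "('q \<Rightarrow> 'a \<Rightarrow> 'q) \<Rightarrow> ('a list \<times> 'g) set \<Rightarrow> 'q \<Rightarrow> 'g \<Rightarrow> 'q set" where
  "psi_star \<delta> R q g = {dfa_run \<delta> q s | s. (s, g) \<in> R}"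

end

theory Submission
  imports Defs
begin

text \<open>Both claims reduce to one observation: the completions of y = g1 ... gm are exactly the
  concatenations s1 ... sm with si R gi. A completion is the shortest input on which its filter
  outputs y, so it ends exactly where the m-th block of the filter ends; conversely the filter
  built from the blocks si themselves has s1 ... sm as a completion. The states \<psi>* reaches on y
  are by construction the \<phi>-states reached on these concatenations, i.e. on the completions of y,
  which gives the monitor condition and L(\<psi>*) = L_opt at once.\<close>

lemma dfa_run_append: "dfa_run \<delta> q (xs @ ys) = dfa_run \<delta> (dfa_run \<delta> q xs) ys"
  by (simp add: dfa_run_def)

lemma dfa_run_in_states:
  assumes "is_dfa Q \<Sigma> \<delta> q0 F" and "q \<in> Q" and "x \<in> lists \<Sigma>"
  shows "dfa_run \<delta> q x \<in> Q"
  using assms(2,3)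
proof (induction x arbitrary: q)
  case Nil
  then show ?case by (simp add: dfa_run_def)
next
  case (Cons a x)
  then have "\<delta> q a \<in> Q" using assms(1) by (auto simp: is_dfa_def)
  with Cons show ?case by (simp add: dfa_run_def)
qed

text \<open>The paper's R\<inverse>(g1) \<dots> R\<inverse>(gm), with the blocks paired with their letters.\<close>
definition loss_preimage :: "('a list \<times> 'g) set \<Rightarrow> 'g list \<Rightarrow> 'a list set" where
  "loss_preimage R y = {concat (map fst ps) | ps. set ps \<subseteq> R \<and> map snd ps = y}"

lemma loss_preimage_Nil [simp]: "loss_preimage R [] = {[]}"
  by (simp add: loss_preimage_def)

lemma loss_preimage_Cons:
  "loss_preimage R (g # y) = {s @ x | s x. (s, g) \<in> R \<and> x \<in> loss_preimage R y}"
proof (intro set_eqI iffI)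
  fix x assume "x \<in> loss_preimage R (g # y)"
  then obtain s ps where "set ps \<subseteq> R" "(s, g) \<in> R" "map snd ps = y" "x = s @ concat (map fst ps)"
    by (auto simp: loss_preimage_def Cons_eq_map_conv)
  then show "x \<in> {s @ x | s x. (s, g) \<in> R \<and> x \<in> loss_preimage R y}"
    by (auto simp: loss_preimage_def)
next
  fix x assume "x \<in> {s @ x | s x. (s, g) \<in> R \<and> x \<in> loss_preimage R y}"
  then obtain s ps where "set ps \<subseteq> R" "(s, g) \<in> R" "map snd ps = y" "x = s @ concat (map fst ps)"
    by (auto simp: loss_preimage_def)
  then show "x \<in> loss_preimage R (g # y)"
    unfolding loss_preimage_def by (intro CollectI exI[of _ "(s, g) # ps"]) auto
qed

lemma loss_preimage_subset_lists:
  assumes "R \<subseteq> lists \<Sigma> \<times> \<Gamma>"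
  shows "loss_preimage R y \<subseteq> lists \<Sigma>"
  using assms by (force simp: loss_preimage_def)

lemma dfa_run_image_loss_preimage_Cons:
  "dfa_run \<delta> q ` loss_preimage R (g # y) =
     (\<Union>s\<in>{s. (s, g) \<in> R}. dfa_run \<delta> (dfa_run \<delta> q s) ` loss_preimage R y)"
  unfolding loss_preimage_Cons
proof (intro set_eqI iffI)
  fix q' assume "q' \<in> dfa_run \<delta> q ` {s @ x | s x. (s, g) \<in> R \<and> x \<in> loss_preimage R y}"
  then show "q' \<in> (\<Union>s\<in>{s. (s, g) \<in> R}. dfa_run \<delta> (dfa_run \<delta> q s) ` loss_preimage R y)"
    by (auto simp: dfa_run_append)
next
  fix q' assume "q' \<in> (\<Union>s\<in>{s. (s, g) \<in> R}. dfa_run \<delta> (dfa_run \<delta> q s) ` loss_preimage R y)"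
  then obtain s x where "(s, g) \<in> R" "x \<in> loss_preimage R y" "q' = dfa_run \<delta> q (s @ x)"
    by (auto simp: dfa_run_append)
  then show "q' \<in> dfa_run \<delta> q ` {s @ x | s x. (s, g) \<in> R \<and> x \<in> loss_preimage R y}"
    by blast
qed

lemma nfa_run_psi_star:
  "nfa_run (psi_star \<delta> R) S y = (\<Union>q\<in>S. dfa_run \<delta> q ` loss_preimage R y)"
proof (induction y arbitrary: S)
  case Nil
  show ?case by (simp add: nfa_run_def dfa_run_def)
next
  case (Cons g y)
  have "nfa_run (psi_star \<delta> R) S (g # y) = nfa_run (psi_star \<delta> R) (\<Union>q\<in>S. psi_star \<delta> R q g) y"
    by (simp add: nfa_run_def)
  also have "\<dots> = (\<Union>q\<in>S. \<Union>s\<in>{s. (s, g) \<in> R}. dfa_run \<delta> (dfa_run \<delta> q s) ` loss_preimage R y)"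
    by (auto simp: Cons psi_star_def)
  also have "\<dots> = (\<Union>q\<in>S. dfa_run \<delta> q ` loss_preimage R (g # y))"
    by (simp add: dfa_run_image_loss_preimage_Cons)
  finally show ?case .
qed

text \<open>The index j in the definition of a filter: the number of blocks the filter has fully read.\<close>
definition filter_index :: "('a list \<times> 'g) list \<Rightarrow> 'a list \<Rightarrow> nat" where
  "filter_index ps x = (GREATEST j. j \<le> length ps \<and> prefix (concat (map fst (take j ps))) x)"

lemma filter_fun_eq_take: "filter_fun ps x = map snd (take (filter_index ps x) ps)"
  by (simp add: filter_fun_def filter_index_def)

lemma
  shows filter_index_le_length: "filter_index ps x \<le> length ps"
    and prefix_filter_index: "prefix (concat (map fst (take (filter_index ps x) ps))) x"
proof -
  have "filter_index ps x \<le> length ps \<and> prefix (concat (map fst (take (filter_index ps x) ps))) x"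
    unfolding filter_index_def by (rule GreatestI_nat[of _ 0 "length ps"]) auto
  then show "filter_index ps x \<le> length ps" "prefix (concat (map fst (take (filter_index ps x) ps))) x"
    by auto
qed

lemma le_filter_index:
  assumes "j \<le> length ps" and "prefix (concat (map fst (take j ps))) x"
  shows "j \<le> filter_index ps x"
  unfolding filter_index_def by (rule Greatest_le_nat[of _ j "length ps"]) (use assms in auto)

lemma length_filter_fun: "length (filter_fun ps x) = filter_index ps x"
  using filter_index_le_length[of ps x] by (simp add: filter_fun_eq_take)

lemma filter_index_mono:
  assumes "prefix x' x"
  shows "filter_index ps x' \<le> filter_index ps x"
  using le_filter_index filter_index_le_length prefix_filter_index assms prefix_order.trans
  by blast

lemma completion_in_loss_preimage:
  assumes "x \<in> completions \<Sigma> R y"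
  shows "x \<in> loss_preimage R y"
proof -
  from assms obtain ps where ps: "set ps \<subseteq> R" and fx: "filter_fun ps x = y"
    and shortest: "\<And>x'. strict_prefix x' x \<Longrightarrow> filter_fun ps x' \<noteq> y"
    unfolding completions_def by blast
  define J where "J = filter_index ps x"
  define c where "c = concat (map fst (take J ps))"
  have "prefix c x"
    unfolding c_def J_def by (rule prefix_filter_index)
  moreover have "filter_index ps c = J"
    using filter_index_mono[OF \<open>prefix c x\<close>, of ps] le_filter_index[of J ps c]
      filter_index_le_length[of ps x]
    unfolding c_def J_def by simp
  then have "filter_fun ps c = y"
    using fx by (simp add: filter_fun_eq_take J_def)
  ultimately have "x = c"
    using shortest by (metis prefix_order.le_less)
  moreover have "set (take J ps) \<subseteq> R"
    using set_take_subset[of J ps] ps by blast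
  ultimately show ?thesis
    using fx unfolding loss_preimage_def c_def J_def filter_fun_eq_take by blast
qed

lemma loss_preimage_in_completions:
  assumes "x \<in> loss_preimage R y"
  shows "x \<in> completions \<Sigma> R y"
proof -
  from assms obtain ps where ps_R: "set ps \<subseteq> R" and snd_ps: "map snd ps = y"
    and x: "x = concat (map fst ps)"
    by (auto simp: loss_preimage_def)
  have "filter_index ps x = length ps"
    using le_filter_index[of "length ps" ps x] filter_index_le_length[of ps x] x by simp
  then have fx: "filter_fun ps x = y"
    by (simp add: filter_fun_eq_take snd_ps)
  have "filter_fun ps x' \<noteq> y" if "strict_prefix x' x" for x'
  proof
    assume "filter_fun ps x' = y"
    then have "filter_index ps x' = length ps"
      using length_filter_fun[of ps x'] snd_ps by (metis length_map)
    then have "prefix x x'"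
      using prefix_filter_index[of ps x'] x by simp
    with that show False
      using prefix_order.antisym by (auto simp: strict_prefix_def)
  qed
  with ps_R fx show ?thesis
    unfolding completions_def by (intro CollectI exI[of _ ps] exI[of _ "[]"]) (simp add: x)
qed

lemma completions_eq_loss_preimage: "completions \<Sigma> R y = loss_preimage R y"
  using completion_in_loss_preimage loss_preimage_in_completions by blast

theorem theorem3:
  fixes Q :: "'q set" and \<Sigma> :: "'a set" and \<Gamma> :: "'g set"
    and \<delta> :: "'q \<Rightarrow> 'a \<Rightarrow> 'q" and q0 qerr :: 'q and R :: "('a list \<times> 'g) set"
  assumes "finite_state_property Q \<Sigma> \<delta> q0 qerr"
    and "loss_model \<Sigma> \<Gamma> R"
  shows "superposed_monitor \<Sigma> \<Gamma> \<delta> q0 R (psi_star \<delta> R)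
       \<and> nfa_lang \<Gamma> Q (psi_star \<delta> R) q0 qerr = L_opt \<Sigma> \<Gamma> \<delta> q0 qerr R"
proof
  have run: "nfa_run (psi_star \<delta> R) {q0} y = dfa_run \<delta> q0 ` completions \<Sigma> R y" for y
    by (simp add: nfa_run_psi_star completions_eq_loss_preimage)
  then show "superposed_monitor \<Sigma> \<Gamma> \<delta> q0 R (psi_star \<delta> R)"
    by (simp add: superposed_monitor_def)
  have dfa: "is_dfa Q \<Sigma> \<delta> q0 (Q - {qerr})"
    using assms(1) by (simp add: finite_state_property_def min_state_dfa_def)
  have "completions \<Sigma> R y \<subseteq> lists \<Sigma>" for y
    using assms(2) loss_preimage_subset_lists[of R \<Sigma> \<Gamma>]
    by (simp add: loss_model_def completions_eq_loss_preimage)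
  moreover have "dfa_run \<delta> q0 x \<in> Q" if "x \<in> lists \<Sigma>" for x
    using dfa_run_in_states[OF dfa _ that] dfa by (simp add: is_dfa_def)
  ultimately show "nfa_lang \<Gamma> Q (psi_star \<delta> R) q0 qerr = L_opt \<Sigma> \<Gamma> \<delta> q0 qerr R"
    by (fastforce simp: nfa_lang_def L_opt_def prop_lang_def run)
qed

end
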